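(* Let $a<b$, $c<d$. If $f:[a,b]\times[c,d]\to\mathbb{R}$ is continuous and of bounded variation in the sense of Arzelà, then the box dimension of its graph $G(f)$ exists and $$\dim_B(G(f))=\dim_H(G(f))=2.$$
   Context: The graph of $f:[a,b]\times[c,d]\to\mathbb{R}$ is $G(f)=\{(x,y,f(x,y)):(x,y)\in[a,b]\times[c,d]\}\subset\mathbb{R}^3$; $\dim_H$ and $\dim_B$ denote Hausdorff and box-counting dimension. A function $f:[a,b]\times[c,d]\to\mathbb{R}$ is of bounded variation in the sense of Arzelà if there is a constant $K$ such that for every $m\in\mathbb{N}$ and all points $a=x_0\le x_1\le\dots\le x_m=b$, $c=y_0\le y_1\le\dots\le y_m=d$, one has $\sum_{i=0}^{m-1}|f(x_{i+1},y_{i+1})-f(x_i,y_i)|\le K$. *)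

theory Defs
  imports "HOL-Analysis.Analysis"
begin

text \<open>Hausdorff s-dimensional measure via countable delta-covers by bounded sets
  (Falconer's definition, unnormalised).\<close>

definition hausdorff_content :: "real \<Rightarrow> real \<Rightarrow> 'a::metric_space set \<Rightarrow> ennreal" where
  "hausdorff_content s \<delta> F =
     (INF U \<in> {U :: nat \<Rightarrow> 'a set. F \<subseteq> (\<Union>i. U i) \<and> (\<forall>i. bounded (U i) \<and> diameter (U i) \<le> \<delta>)}.
        (\<Sum>i. ennreal (diameter (U i) powr s)))"

definition hausdorff_measure :: "real \<Rightarrow> 'a::metric_space set \<Rightarrow> ennreal" where
  "hausdorff_measure s F = (SUP \<delta> \<in> {0<..}. hausdorff_content s \<delta> F)"

definition hausdorff_dim :: "'a::metric_space set \<Rightarrow> real" where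
  "hausdorff_dim F = Inf {s. 0 \<le> s \<and> hausdorff_measure s F = 0}"

definition covering_number :: "real \<Rightarrow> 'a::metric_space set \<Rightarrow> nat" where
  "covering_number \<delta> F =
     Inf {card C | C. finite C \<and> F \<subseteq> \<Union>C \<and> (\<forall>U\<in>C. bounded U \<and> diameter U \<le> \<delta>)}"

definition lower_box_dim :: "'a::metric_space set \<Rightarrow> ereal" where
  "lower_box_dim F = Liminf (at_right 0) (\<lambda>\<delta>. ereal (ln (real (covering_number \<delta> F)) / - ln \<delta>))"

definition upper_box_dim :: "'a::metric_space set \<Rightarrow> ereal" where
  "upper_box_dim F = Limsup (at_right 0) (\<lambda>\<delta>. ereal (ln (real (covering_number \<delta> F)) / - ln \<delta>))"

definition has_box_dim :: "'a::metric_space set \<Rightarrow> real \<Rightarrow> bool" where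
  "has_box_dim F d \<longleftrightarrow> lower_box_dim F = ereal d \<and> upper_box_dim F = ereal d"

text \<open>Graph in R^3 = real \<times> real \<times> real (product metric is Euclidean).\<close>
definition graph2 :: "real \<Rightarrow> real \<Rightarrow> real \<Rightarrow> real \<Rightarrow> (real \<times> real \<Rightarrow> real) \<Rightarrow> (real \<times> real \<times> real) set" where
  "graph2 a b c d f = {(x, y, f (x, y)) | x y. x \<in> {a..b} \<and> y \<in> {c..d}}"

definition arzela_bv :: "real \<Rightarrow> real \<Rightarrow> real \<Rightarrow> real \<Rightarrow> (real \<times> real \<Rightarrow> real) \<Rightarrow> bool" where
  "arzela_bv a b c d f \<longleftrightarrow> (\<exists>K. \<forall>(m::nat) (x::nat \<Rightarrow> real) (y::nat \<Rightarrow> real).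
      x 0 = a \<and> x m = b \<and> y 0 = c \<and> y m = d \<and> (\<forall>i<m. x i \<le> x (Suc i) \<and> y i \<le> y (Suc i))
      \<longrightarrow> (\<Sum>i<m. \<bar>f (x (Suc i), y (Suc i)) - f (x i, y i)\<bar>) \<le> K)"

end

theory Submission
  imports Defs "HOL-Real_Asymp.Real_Asymp"
begin

text \<open>
  Projecting \<open>G(f)\<close> to the plane gives the rectangle \<open>R = [a,b] \<times> [c,d]\<close>, and projection does
  not increase diameters; so any cover of \<open>G(f)\<close> by sets \<open>U\<^sub>i\<close> yields squares of side
  \<open>2 diam U\<^sub>i\<close> covering \<open>R\<close>, hence \<open>area R \<le> 4 \<Sum> (diam U\<^sub>i)\<^sup>2\<close>. This forces \<open>H\<^sup>s(G) > 0\<close>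
  for \<open>s < 2\<close> and \<open>N\<^sub>\<delta>(G) \<ge> area R / (4\<delta>\<^sup>2)\<close>.

  Conversely, cut \<open>R\<close> into an \<open>n \<times> n\<close> grid. Over a cell the graph fits into
  \<open>\<lceil>osc / h\<rceil> + 1\<close> cubes of side \<open>h \<sim> 1/n\<close>, where \<open>osc\<close> is the oscillation of \<open>f\<close> on the cell.
  Along each of the \<open>2n\<close> diagonals of the grid, the lower-left corners of the cells interleaved
  with points where \<open>f\<close> attains its extrema form a monotone chain, so Arzela bounded
  variation bounds the sum of the oscillations on a diagonal by \<open>2K\<close>. Hence \<open>O(n\<^sup>2)\<close> cubes
  suffice, \<open>N\<^sub>\<delta>(G) = O(\<delta>\<^sup>-\<^sup>2)\<close>, and \<open>H\<^sup>s(G) = 0\<close> for \<open>s > 2\<close>.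
\<close>

section \<open>Dimensions from covering estimates\<close>

lemma finite_family_enumeration:
  assumes "finite C"
  obtains U :: "nat \<Rightarrow> 'a set" where "(\<Union>i. U i) = \<Union>C" "\<And>i. U i \<in> insert {} C"
    "\<And>g :: 'a set \<Rightarrow> real. g {} = 0 \<Longrightarrow> (\<And>V. 0 \<le> g V) \<Longrightarrow> (\<Sum>i. ennreal (g (U i))) = ennreal (\<Sum>V\<in>C. g V)"
proof -
  obtain xs where xs: "set xs = C" "distinct xs"
    using finite_distinct_list[OF assms] by blast
  define U where "U i = (if i < length xs then xs ! i else {})" for i
  have "(\<Sum>i. ennreal (g (U i))) = ennreal (\<Sum>V\<in>C. g V)"
    if "g {} = 0" "\<And>V. 0 \<le> g V" for g :: "'a set \<Rightarrow> real"
  proof -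
    have "(\<Sum>i. ennreal (g (U i))) = (\<Sum>i<length xs. ennreal (g (U i)))"
      by (rule suminf_finite) (auto simp: U_def that(1))
    also have "\<dots> = ennreal (\<Sum>i<length xs. g (xs ! i))"
      using that(2) by (simp add: sum_ennreal U_def)
    also have "(\<Sum>i<length xs. g (xs ! i)) = sum_list (map g xs)"
      by (simp add: sum_list_sum_nth atLeast0LessThan)
    also have "\<dots> = (\<Sum>V\<in>C. g V)"
      using sum.distinct_set_conv_list[OF xs(2), of g] xs(1) by simp
    finally show ?thesis .
  qed
  moreover have "(\<Union>i. U i) = \<Union>C"
    unfolding U_def xs(1)[symmetric]
    by (auto simp: in_set_conv_nth split: if_splits) (metis nth_mem)
  moreover have "U i \<in> insert {} C" for i
    unfolding U_def xs(1)[symmetric] by auto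
  ultimately show ?thesis using that by blast
qed

lemma covering_number_le_card:
  assumes "finite C" "F \<subseteq> \<Union>C" "\<forall>U\<in>C. bounded U \<and> diameter U \<le> \<delta>"
  shows "covering_number \<delta> F \<le> card C"
  unfolding covering_number_def using assms by (intro cInf_lower) auto

lemma covering_number_attained:
  assumes "finite C" "F \<subseteq> \<Union>C" "\<forall>U\<in>C. bounded U \<and> diameter U \<le> \<delta>"
  obtains C' where "finite C'" "F \<subseteq> \<Union>C'" "\<forall>U\<in>C'. bounded U \<and> diameter U \<le> \<delta>"
    "card C' = covering_number \<delta> F"
proof -
  let ?S = "{card C | C. finite C \<and> F \<subseteq> \<Union>C \<and> (\<forall>U\<in>C. bounded U \<and> diameter U \<le> \<delta>)}"
  have "Inf ?S \<in> ?S" using assms by (intro Inf_nat_def1) auto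
  then show ?thesis using that unfolding covering_number_def by auto
qed

lemma hausdorff_content_le_finite_cover:
  fixes F :: "'a::metric_space set"
  assumes "finite C" "F \<subseteq> \<Union>C" "\<forall>U\<in>C. bounded U \<and> diameter U \<le> \<delta>" "0 \<le> \<delta>"
  shows "hausdorff_content s \<delta> F \<le> ennreal (\<Sum>V\<in>C. diameter V powr s)"
proof -
  obtain U where U: "(\<Union>i. U i) = \<Union>C" "\<And>i. U i \<in> insert {} C"
    "\<And>g :: _ set \<Rightarrow> real. g {} = 0 \<Longrightarrow> (\<And>V. 0 \<le> g V) \<Longrightarrow> (\<Sum>i. ennreal (g (U i))) = ennreal (\<Sum>V\<in>C. g V)"
    using finite_family_enumeration[OF assms(1)] by blast
  have "bounded (U i) \<and> diameter (U i) \<le> \<delta>" for i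
    using U(2)[of i] assms(3,4) by auto
  then have "F \<subseteq> (\<Union>i. U i) \<and> (\<forall>i. bounded (U i) \<and> diameter (U i) \<le> \<delta>)"
    using U(1) assms(2) by simp
  then have "hausdorff_content s \<delta> F \<le> (\<Sum>i. ennreal (diameter (U i) powr s))"
    unfolding hausdorff_content_def by (intro INF_lower) simp
  also have "\<dots> = ennreal (\<Sum>V\<in>C. diameter V powr s)"
    by (rule U(3)) auto
  finally show ?thesis .
qed

lemma hausdorff_measure_eq_0_if_small_covers:
  fixes F :: "'a::metric_space set"
  assumes "0 < \<delta>0" "0 \<le> t" "t < s"
    and covers: "\<And>\<delta>. 0 < \<delta> \<Longrightarrow> \<delta> < \<delta>0 \<Longrightarrow> \<exists>C. finite C \<and> F \<subseteq> \<Union>C \<and>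
      (\<forall>U\<in>C. bounded U \<and> diameter U \<le> \<delta>) \<and> real (card C) \<le> B / \<delta> powr t"
  shows "hausdorff_measure s F = 0"
proof -
  have small: "hausdorff_content s \<eta> F \<le> ennreal \<epsilon>" if "0 < \<eta>" "0 < \<epsilon>" for \<eta> \<epsilon>
  proof -
    have "((\<lambda>\<delta>. B * \<delta> powr (s - t)) \<longlongrightarrow> 0) (at_right 0)"
      using assms(3) by real_asymp
    then have "\<forall>\<^sub>F \<delta> in at_right 0. B * \<delta> powr (s - t) < \<epsilon> \<and> \<delta> \<in> {0<..<min \<eta> \<delta>0}"
      using that assms(1) by (intro eventually_conj order_tendstoD(2) eventually_at_right_real) auto
    then have "\<exists>\<delta>. B * \<delta> powr (s - t) < \<epsilon> \<and> \<delta> \<in> {0<..<min \<eta> \<delta>0}"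
      by (rule eventually_happens'[rotated]) simp
    then obtain \<delta> where \<delta>: "B * \<delta> powr (s - t) < \<epsilon>" "0 < \<delta>" "\<delta> < \<eta>" "\<delta> < \<delta>0"
      by auto
    obtain C where C: "finite C" "F \<subseteq> \<Union>C" "\<forall>U\<in>C. bounded U \<and> diameter U \<le> \<delta>"
      "real (card C) \<le> B / \<delta> powr t"
      using covers[OF \<delta>(2,4)] by blast
    have "(\<Sum>V\<in>C. diameter V powr s) \<le> (\<Sum>V\<in>C. \<delta> powr s)"
      using C(3) assms(2,3) by (intro sum_mono powr_mono2) (auto simp: diameter_ge_0)
    also have "\<dots> = real (card C) * \<delta> powr s" by simp
    also have "\<dots> \<le> B / \<delta> powr t * \<delta> powr s" using C(4) by (intro mult_right_mono) auto
    also have "\<dots> = B * \<delta> powr (s - t)" using \<delta>(2) by (simp add: powr_diff)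
    finally have sum_le: "(\<Sum>V\<in>C. diameter V powr s) \<le> \<epsilon>" using \<delta>(1) by simp
    have "\<forall>U\<in>C. bounded U \<and> diameter U \<le> \<eta>"
      using C(3) \<delta>(3) by auto
    then have "hausdorff_content s \<eta> F \<le> ennreal (\<Sum>V\<in>C. diameter V powr s)"
      using C(1,2) \<open>0 < \<eta>\<close> by (intro hausdorff_content_le_finite_cover) auto
    then show ?thesis
      using ennreal_leI[OF sum_le] by (rule order_trans)
  qed
  have "hausdorff_content s \<eta> F = 0" if "0 < \<eta>" for \<eta>
  proof -
    have "hausdorff_content s \<eta> F \<le> 0"
    proof (rule ennreal_le_epsilon)
      fix \<epsilon> :: real assume "0 < \<epsilon>"
      then show "hausdorff_content s \<eta> F \<le> 0 + ennreal \<epsilon>"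
        using small[OF that \<open>0 < \<epsilon>\<close>] by simp
    qed
    then show ?thesis by simp
  qed
  then show ?thesis unfolding hausdorff_measure_def by simp
qed

lemma hausdorff_measure_ne_0_if_cover_sums_bounded_below:
  fixes F :: "'a::metric_space set"
  assumes "0 < A" "s \<le> t"
    and lower: "\<And>U. F \<subseteq> (\<Union>i. U i) \<Longrightarrow> (\<forall>i. bounded (U i) \<and> diameter (U i) \<le> 1) \<Longrightarrow>
      ennreal A \<le> (\<Sum>i. ennreal (diameter (U i) powr t))"
  shows "hausdorff_measure s F \<noteq> 0"
proof -
  have "ennreal A \<le> hausdorff_content s 1 F"
    unfolding hausdorff_content_def
  proof (rule INF_greatest, clarify)
    fix U :: "nat \<Rightarrow> 'a set"
    assume U: "F \<subseteq> (\<Union>i. U i)" "\<forall>i. bounded (U i) \<and> diameter (U i) \<le> 1"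
    have "ennreal A \<le> (\<Sum>i. ennreal (diameter (U i) powr t))" by (rule lower[OF U])
    also have "\<dots> \<le> (\<Sum>i. ennreal (diameter (U i) powr s))"
      using U(2) assms(2) by (intro suminf_le ennreal_leI powr_mono') (auto simp: diameter_ge_0)
    finally show "ennreal A \<le> (\<Sum>i. ennreal (diameter (U i) powr s))" .
  qed
  also have "\<dots> \<le> hausdorff_measure s F"
    unfolding hausdorff_measure_def by (rule SUP_upper) simp
  finally show ?thesis using assms(1) by (auto simp: ennreal_eq_0_iff)
qed

lemma hausdorff_dim_eqI:
  assumes "0 \<le> t" and zero: "\<And>s. t < s \<Longrightarrow> hausdorff_measure s F = 0"
    and nonzero: "\<And>s. 0 \<le> s \<Longrightarrow> s < t \<Longrightarrow> hausdorff_measure s F \<noteq> 0"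
  shows "hausdorff_dim F = t"
proof -
  let ?Z = "{s. 0 \<le> s \<and> hausdorff_measure s F = 0}"
  have below: "t \<le> s" if "s \<in> ?Z" for s
    using that nonzero[of s] by (cases "s < t") auto
  have above: "t + \<epsilon> \<in> ?Z" if "0 < \<epsilon>" for \<epsilon>
    using that assms(1) zero[of "t + \<epsilon>"] by simp
  have "Inf ?Z \<le> t + \<epsilon>" if "0 < \<epsilon>" for \<epsilon>
    using above[OF that] by (rule cInf_lower) (use below in \<open>rule bdd_belowI\<close>)
  then have "Inf ?Z \<le> t"
    by (rule field_le_epsilon)
  moreover have "t \<le> Inf ?Z"
    using above[of 1] below by (intro cInf_greatest) auto
  ultimately show ?thesis
    unfolding hausdorff_dim_def by simp
qed

lemma has_box_dim_if_covering_number_bounds: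
  fixes F :: "'a::metric_space set"
  assumes "0 < A" "0 < B" "0 < \<delta>0"
    and bounds: "\<And>\<delta>. 0 < \<delta> \<Longrightarrow> \<delta> < \<delta>0 \<Longrightarrow>
      A / \<delta> powr t \<le> real (covering_number \<delta> F) \<and> real (covering_number \<delta> F) \<le> B / \<delta> powr t"
  shows "has_box_dim F t"
proof -
  define g where "g \<delta> = ln (real (covering_number \<delta> F)) / - ln \<delta>" for \<delta>
  have ln_bound: "ln (C / \<delta> powr t) / - ln \<delta> = t + ln C / - ln \<delta>" if "0 < C" "0 < \<delta>" "\<delta> < 1" for C \<delta>
    using that by (simp add: ln_div ln_powr field_simps)
  have "\<forall>\<^sub>F \<delta> in at_right 0. t + ln A / - ln \<delta> \<le> g \<delta> \<and> g \<delta> \<le> t + ln B / - ln \<delta>"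
  proof -
    have "\<forall>\<^sub>F \<delta> in at_right 0. \<delta> \<in> {0<..<min \<delta>0 1}"
      using assms(3) by (intro eventually_at_right_real) simp
    then show ?thesis
    proof eventually_elim
      case (elim \<delta>)
      then have \<delta>: "0 < \<delta>" "\<delta> < \<delta>0" "\<delta> < 1" by auto
      have pos: "0 < A / \<delta> powr t" "0 < - ln \<delta>" using \<delta> assms(1) by auto
      have "ln (A / \<delta> powr t) \<le> ln (real (covering_number \<delta> F))"
           "ln (real (covering_number \<delta> F)) \<le> ln (B / \<delta> powr t)"
        using bounds[OF \<delta>(1,2)] pos(1) by (auto intro: order_less_le_trans)
      then show ?case
        using ln_bound[OF assms(1) \<delta>(1,3)] ln_bound[OF assms(2) \<delta>(1,3)] pos(2)
        unfolding g_def by (metis divide_right_mono less_imp_le)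
    qed
  qed
  moreover have "((\<lambda>\<delta>. t + ln C / - ln \<delta>) \<longlongrightarrow> t) (at_right 0)" for C :: real
    by real_asymp
  ultimately have "(g \<longlongrightarrow> t) (at_right 0)"
    by (intro real_tendsto_sandwich[of "\<lambda>\<delta>. t + ln A / - ln \<delta>" g _ "\<lambda>\<delta>. t + ln B / - ln \<delta>"])
      (auto elim: eventually_mono)
  then have "((\<lambda>\<delta>. ereal (g \<delta>)) \<longlongrightarrow> ereal t) (at_right 0)"
    by (rule tendsto_ereal)
  then show ?thesis
    unfolding has_box_dim_def lower_box_dim_def upper_box_dim_def g_def
    by (simp add: lim_imp_Liminf lim_imp_Limsup)
qed

lemma covering_number_lower_bound:
  fixes F :: "'a::metric_space set"
  assumes C: "finite C" "F \<subseteq> \<Union>C" "\<forall>U\<in>C. bounded U \<and> diameter U \<le> \<delta>" and "0 \<le> t"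
    and lower: "\<And>U. F \<subseteq> (\<Union>i. U i) \<Longrightarrow> (\<forall>i. bounded (U i)) \<Longrightarrow>
      ennreal A \<le> (\<Sum>i. ennreal (diameter (U i) powr t))"
  shows "A \<le> real (covering_number \<delta> F) * \<delta> powr t"
proof -
  obtain C' where C': "finite C'" "F \<subseteq> \<Union>C'" "\<forall>U\<in>C'. bounded U \<and> diameter U \<le> \<delta>"
    "card C' = covering_number \<delta> F"
    by (rule covering_number_attained[OF C]) (rule that)
  obtain U where U: "(\<Union>i. U i) = \<Union>C'" "\<And>i. U i \<in> insert {} C'"
    "\<And>g :: _ set \<Rightarrow> real. g {} = 0 \<Longrightarrow> (\<And>V. 0 \<le> g V) \<Longrightarrow> (\<Sum>i. ennreal (g (U i))) = ennreal (\<Sum>V\<in>C'. g V)"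
    using finite_family_enumeration[OF C'(1)] by blast
  have "bounded (U i)" for i using U(2)[of i] C'(3) by auto
  then have "ennreal A \<le> (\<Sum>i. ennreal (diameter (U i) powr t))"
    using lower C'(2) U(1) by simp
  also have "\<dots> = ennreal (\<Sum>V\<in>C'. diameter V powr t)"
    by (rule U(3)) auto
  finally have "A \<le> (\<Sum>V\<in>C'. diameter V powr t)"
    by (subst (asm) ennreal_le_iff) (auto intro: sum_nonneg)
  also have "\<dots> \<le> (\<Sum>V\<in>C'. \<delta> powr t)"
    using C'(3) \<open>0 \<le> t\<close> by (intro sum_mono powr_mono2) (auto simp: diameter_ge_0)
  finally show ?thesis using C'(4) by simp
qed

lemma box_dim_and_hausdorff_dim_eqI:
  fixes F :: "'a::metric_space set"
  assumes "0 < A" "0 < B" "0 < \<delta>0" "0 \<le> t"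
    and covers: "\<And>\<delta>. 0 < \<delta> \<Longrightarrow> \<delta> < \<delta>0 \<Longrightarrow> \<exists>C. finite C \<and> F \<subseteq> \<Union>C \<and>
      (\<forall>U\<in>C. bounded U \<and> diameter U \<le> \<delta>) \<and> real (card C) \<le> B / \<delta> powr t"
    and lower: "\<And>U. F \<subseteq> (\<Union>i. U i) \<Longrightarrow> (\<forall>i. bounded (U i)) \<Longrightarrow>
      ennreal A \<le> (\<Sum>i. ennreal (diameter (U i) powr t))"
  shows "has_box_dim F t \<and> hausdorff_dim F = t"
proof
  show "has_box_dim F t"
  proof (rule has_box_dim_if_covering_number_bounds[OF assms(1-3)])
    fix \<delta> :: real assume \<delta>: "0 < \<delta>" "\<delta> < \<delta>0"
    then obtain C where C: "finite C" "F \<subseteq> \<Union>C" "\<forall>U\<in>C. bounded U \<and> diameter U \<le> \<delta>"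
      "real (card C) \<le> B / \<delta> powr t"
      using covers by blast
    have "A \<le> real (covering_number \<delta> F) * \<delta> powr t"
      by (rule covering_number_lower_bound[OF C(1-3) \<open>0 \<le> t\<close> lower])
    then show "A / \<delta> powr t \<le> real (covering_number \<delta> F) \<and>
        real (covering_number \<delta> F) \<le> B / \<delta> powr t"
      using covering_number_le_card[OF C(1-3)] C(4) \<delta>(1) by (simp add: pos_divide_le_eq)
  qed
  show "hausdorff_dim F = t"
  proof (rule hausdorff_dim_eqI[OF \<open>0 \<le> t\<close>])
    show "hausdorff_measure s F = 0" if "t < s" for s
      by (rule hausdorff_measure_eq_0_if_small_covers[OF \<open>0 < \<delta>0\<close> \<open>0 \<le> t\<close> that covers])
    show "hausdorff_measure s F \<noteq> 0" if "0 \<le> s" "s < t" for s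
    proof (rule hausdorff_measure_ne_0_if_cover_sums_bounded_below[OF \<open>0 < A\<close>])
      show "s \<le> t" using that(2) by simp
      show "ennreal A \<le> (\<Sum>i. ennreal (diameter (U i) powr t))"
        if "F \<subseteq> (\<Union>i. U i)" "\<forall>i. bounded (U i) \<and> diameter (U i) \<le> 1" for U
        using that by (intro lower) auto
    qed
  qed
qed

section \<open>The area bound\<close>

lemma emeasure_lborel_le_sum_diameter_sq:
  fixes U :: "nat \<Rightarrow> (real \<times> real \<times> 'a::metric_space) set"
  assumes cover: "S \<subseteq> (\<lambda>(x, y, z). (x, y)) ` (\<Union>i. U i)"
    and bdd: "\<And>i. bounded (U i)"
  shows "emeasure lborel S \<le> (\<Sum>i. ennreal (4 * diameter (U i)^2))"
proof -
  define u where "u i = (SOME u. u \<in> U i)" for i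
  define r where "r i = diameter (U i)" for i
  define B where "B i = (if U i = {} then {} else
    cbox (fst (u i) - r i, fst (snd (u i)) - r i) (fst (u i) + r i, fst (snd (u i)) + r i))" for i
  have "(x, y) \<in> B i" if "(x, y, z) \<in> U i" for x y z i
  proof -
    have "u i \<in> U i" using that unfolding u_def by (rule someI)
    then have "dist (x, y, z) (u i) \<le> r i"
      unfolding r_def using bdd that by (intro diameter_bounded_bound)
    then have "dist x (fst (u i)) \<le> r i" "dist y (fst (snd (u i))) \<le> r i"
      using dist_fst_le[of "(x, y, z)" "u i"] dist_fst_le[of "(y, z)" "snd (u i)"]
        dist_snd_le[of "(x, y, z)" "u i"] by auto
    then show ?thesis using that
      by (auto simp: B_def cbox_Pair_eq dist_real_def abs_le_iff)
  qed
  then have "S \<subseteq> (\<Union>i. B i)" using cover by fastforce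
  then have "emeasure lborel S \<le> emeasure lborel (\<Union>i. B i)"
    by (intro emeasure_mono) (auto simp: B_def)
  also have "\<dots> \<le> (\<Sum>i. emeasure lborel (B i))"
    by (intro emeasure_subadditive_countably) (auto simp: B_def)
  also have "\<dots> \<le> (\<Sum>i. ennreal (4 * diameter (U i)^2))"
  proof (intro suminf_le)
    fix i
    have "0 \<le> r i" by (simp add: r_def diameter_ge_0 bdd)
    then show "emeasure lborel (B i) \<le> ennreal (4 * diameter (U i)^2)"
      by (simp add: B_def r_def emeasure_lborel_cbox_eq Basis_prod_def inner_Pair ennreal_mult
          power2_eq_square algebra_simps)
  qed auto
  finally show ?thesis .
qed

lemma graph2_area_le_sum_diameter_sq:
  assumes "a \<le> b" "c \<le> d" "graph2 a b c d f \<subseteq> (\<Union>i. U i)" "\<And>i. bounded (U i)"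
  shows "ennreal ((b - a) * (d - c) / 4) \<le> (\<Sum>i. ennreal (diameter (U i) powr 2))"
proof -
  have "{a..b} \<times> {c..d} \<subseteq> (\<lambda>(x, y, z). (x, y)) ` graph2 a b c d f"
    by (force simp: graph2_def)
  then have "{a..b} \<times> {c..d} \<subseteq> (\<lambda>(x, y, z). (x, y)) ` (\<Union>i. U i)"
    by (rule order_trans[OF _ image_mono[OF assms(3)]])
  moreover have rect: "{a..b} \<times> {c..d} = cbox (a, c) (b, d)"
    by (simp add: cbox_Pair_eq)
  ultimately have "emeasure lborel ({a..b} \<times> {c..d}) \<le> (\<Sum>i. ennreal (4 * diameter (U i)^2))"
    using assms(4) by (intro emeasure_lborel_le_sum_diameter_sq) simp_all
  moreover have "emeasure lborel ({a..b} \<times> {c..d}) = ennreal ((b - a) * (d - c))"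
    using assms(1,2) by (simp add: rect emeasure_lborel_cbox_eq Basis_prod_def inner_Pair
        ennreal_mult mult.commute)
  moreover have "ennreal ((b - a) * (d - c)) = 4 * ennreal ((b - a) * (d - c) / 4)"
    using ennreal_mult[of 4 "(b - a) * (d - c) / 4"] assms(1,2) by simp
  moreover have "(\<Sum>i. ennreal (4 * diameter (U i)^2)) = 4 * (\<Sum>i. ennreal (diameter (U i) powr 2))"
    using assms(4) by (simp add: ennreal_mult diameter_ge_0)
  ultimately show ?thesis
    by (simp add: ennreal_mult_le_mult_iff)
qed

section \<open>Arzela variation along monotone chains\<close>

definition arzela_bv_bound :: "real \<Rightarrow> real \<Rightarrow> real \<Rightarrow> real \<Rightarrow> (real \<times> real \<Rightarrow> real) \<Rightarrow> real \<Rightarrow> bool" where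
  "arzela_bv_bound a b c d f K \<longleftrightarrow> (\<forall>(m::nat) (x::nat \<Rightarrow> real) (y::nat \<Rightarrow> real).
      x 0 = a \<and> x m = b \<and> y 0 = c \<and> y m = d \<and> (\<forall>i<m. x i \<le> x (Suc i) \<and> y i \<le> y (Suc i))
      \<longrightarrow> (\<Sum>i<m. \<bar>f (x (Suc i), y (Suc i)) - f (x i, y i)\<bar>) \<le> K)"

lemma arzela_bv_iff_bound: "arzela_bv a b c d f \<longleftrightarrow> (\<exists>K. arzela_bv_bound a b c d f K)"
  unfolding arzela_bv_def arzela_bv_bound_def ..

text \<open>The order on \<open>real \<times> real\<close> is the componentwise one from \<open>Product_Order\<close>.\<close>

lemma arzela_bv_boundD:
  assumes "arzela_bv_bound a b c d f K" "w 0 = (a, c)" "w m = (b, d)" "\<forall>i<m. w i \<le> w (Suc i)"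
  shows "(\<Sum>i<m. \<bar>f (w (Suc i)) - f (w i)\<bar>) \<le> K"
proof -
  have "(\<Sum>i<m. \<bar>f (fst (w (Suc i)), snd (w (Suc i))) - f (fst (w i), snd (w i))\<bar>) \<le> K"
    using assms(1)[unfolded arzela_bv_bound_def, rule_format,
        where m = m and x = "\<lambda>i. fst (w i)" and y = "\<lambda>i. snd (w i)"]
      assms(2-4) by (simp add: less_eq_prod_def)
  then show ?thesis by simp
qed

lemma arzela_chain_le:
  assumes bv: "arzela_bv_bound a b c d f K"
    and mono: "\<forall>i<m. w i \<le> w (Suc i)" and rect: "\<forall>i\<le>m. w i \<in> {(a, c)..(b, d)}"
  shows "(\<Sum>i<m. \<bar>f (w (Suc i)) - f (w i)\<bar>) \<le> K"
proof -
  define w' where "w' i = (if i = 0 then (a, c) else if i \<le> Suc m then w (i - 1) else (b, d))" for i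
  have "\<forall>i<m + 2. w' i \<le> w' (Suc i)"
  proof (intro allI impI)
    fix i assume "i < m + 2"
    then consider "i = 0" | "0 < i" "i \<le> m" | "i = Suc m"
      by linarith
    then show "w' i \<le> w' (Suc i)"
      by cases (use mono rect in \<open>auto simp: w'_def gr0_conv_Suc\<close>)
  qed
  then have "(\<Sum>i<m + 2. \<bar>f (w' (Suc i)) - f (w' i)\<bar>) \<le> K"
    by (intro arzela_bv_boundD[OF bv]) (auto simp: w'_def)
  moreover have "(\<Sum>i<m. \<bar>f (w (Suc i)) - f (w i)\<bar>) = (\<Sum>i\<in>Suc ` {..<m}. \<bar>f (w' (Suc i)) - f (w' i)\<bar>)"
    by (simp add: sum.reindex w'_def)
  moreover have "(\<Sum>i\<in>Suc ` {..<m}. \<bar>f (w' (Suc i)) - f (w' i)\<bar>)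
      \<le> (\<Sum>i<m + 2. \<bar>f (w' (Suc i)) - f (w' i)\<bar>)"
    by (intro sum_mono2) auto
  ultimately show ?thesis by linarith
qed

lemma arzela_bv_bound_nonneg:
  assumes "arzela_bv_bound a b c d f K" "a \<le> b" "c \<le> d"
  shows "0 \<le> K"
  using arzela_chain_le[OF assms(1), where m=0 and w="\<lambda>_. (a, c)"] assms(2,3) by simp

lemma arzela_interleaved_le:
  assumes bv: "arzela_bv_bound a b c d f K" and "a \<le> b" "c \<le> d"
    and qp: "\<And>t. t < L \<Longrightarrow> q t \<le> p t" and pq: "\<And>t. Suc t < L \<Longrightarrow> p t \<le> q (Suc t)"
    and rect: "\<And>t. t < L \<Longrightarrow> q t \<in> {(a, c)..(b, d)} \<and> p t \<in> {(a, c)..(b, d)}"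
  shows "(\<Sum>t<L. \<bar>f (p t) - f (q t)\<bar>) \<le> K"
proof (cases "L = 0")
  case True
  then show ?thesis using arzela_bv_bound_nonneg[OF assms(1-3)] by simp
next
  case False
  define w where "w i = (if even i then q (i div 2) else p (i div 2))" for i
  have "\<forall>i<2 * L - 1. w i \<le> w (Suc i)"
  proof (intro allI impI)
    fix i assume i: "i < 2 * L - 1"
    show "w i \<le> w (Suc i)"
    proof (cases "even i")
      case True
      then show ?thesis using i qp[of "i div 2"] by (auto simp: w_def)
    next
      case False
      then have "Suc (i div 2) < L" using i by presburger
      then show ?thesis using False pq[of "i div 2"] by (auto simp: w_def)
    qed
  qed
  moreover have "\<forall>i\<le>2 * L - 1. w i \<in> {(a, c)..(b, d)}"
    using rect False by (auto simp: w_def)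
  ultimately have "(\<Sum>i<2 * L - 1. \<bar>f (w (Suc i)) - f (w i)\<bar>) \<le> K"
    by (rule arzela_chain_le[OF bv])
  moreover have "(\<Sum>t<L. \<bar>f (p t) - f (q t)\<bar>) = (\<Sum>i\<in>(\<lambda>t. 2 * t) ` {..<L}. \<bar>f (w (Suc i)) - f (w i)\<bar>)"
    by (subst sum.reindex) (auto simp: inj_on_def w_def)
  moreover have "\<dots> \<le> (\<Sum>i<2 * L - 1. \<bar>f (w (Suc i)) - f (w i)\<bar>)"
    using False by (intro sum_mono2) auto
  ultimately show ?thesis by linarith
qed

lemma sum_square_le_by_diagonals:
  fixes g :: "nat \<Rightarrow> nat \<Rightarrow> real"
  assumes diag: "\<And>i0 j0 L. i0 + L \<le> n \<Longrightarrow> j0 + L \<le> n \<Longrightarrow> (\<Sum>t<L. g (i0 + t) (j0 + t)) \<le> K"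
  shows "(\<Sum>i<n. \<Sum>j<n. g i j) \<le> 2 * real n * K"
proof -
  let ?S = "{..<n} \<times> {..<n}"
  txt \<open>The cells with \<open>i + n - j = e\<close> form the diagonal starting at \<open>(e - n, n - e)\<close>;
    by truncated subtraction one of these coordinates is \<open>0\<close>.\<close>
  have fiber: "{ij \<in> ?S. fst ij + n - snd ij = e}
      = (\<lambda>t. (e - n + t, n - e + t)) ` {..<min e (2 * n - e)}" for e
  proof (intro equalityI subsetI)
    fix ij assume "ij \<in> {ij \<in> ?S. fst ij + n - snd ij = e}"
    then obtain i j where "ij = (i, j)" "i < n" "j < n" "i + n - j = e" by auto
    then show "ij \<in> (\<lambda>t. (e - n + t, n - e + t)) ` {..<min e (2 * n - e)}"
      by (intro image_eqI[of _ _ "min i j"]) auto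
  qed auto
  have "(\<Sum>i<n. \<Sum>j<n. g i j) = (\<Sum>(i, j)\<in>?S. g i j)"
    by (simp add: sum.cartesian_product)
  also have "\<dots> = (\<Sum>e<2 * n. \<Sum>(i, j)\<in>{ij \<in> ?S. fst ij + n - snd ij = e}. g i j)"
    by (rule sum.group[symmetric]) auto
  also have "\<dots> = (\<Sum>e<2 * n. \<Sum>t<min e (2 * n - e). g (e - n + t) (n - e + t))"
    by (simp add: fiber sum.reindex inj_on_def)
  also have "\<dots> \<le> (\<Sum>e<2 * n. K)"
    by (intro sum_mono diag) auto
  finally show ?thesis by simp
qed

section \<open>Covering the graph over a grid\<close>

lemma exists_step_interval:
  fixes h m v :: real
  assumes "0 < h" "0 < N" "m \<le> v" "v \<le> m + real N * h"
  shows "\<exists>k<N. m + real k * h \<le> v \<and> v \<le> m + real (Suc k) * h"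
proof (cases "v = m + real N * h")
  case True
  then show ?thesis using assms(1,2) by (intro exI[of _ "N - 1"]) auto
next
  case False
  define k where "k = nat \<lfloor>(v - m) / h\<rfloor>"
  have "0 \<le> (v - m) / h" using assms(1,3) by simp
  then have k: "real k \<le> (v - m) / h" "(v - m) / h < real k + 1"
    unfolding k_def by linarith+
  have "(v - m) / h < real N"
    using assms(1,4) False by (simp add: divide_less_eq mult.commute)
  then have "k < N" using k(1) unfolding k_def by linarith
  moreover have "m + real k * h \<le> v" "v \<le> m + real (Suc k) * h"
    using k assms(1) by (simp_all add: field_simps)
  ultimately show ?thesis by blast
qed

definition grid :: "real \<Rightarrow> real \<Rightarrow> nat \<Rightarrow> nat \<Rightarrow> real" where
  "grid a b n i = a + real i * ((b - a) / n)"

lemma grid_mono: "a \<le> b \<Longrightarrow> i \<le> j \<Longrightarrow> grid a b n i \<le> grid a b n j"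
  unfolding grid_def by (intro add_left_mono mult_right_mono) auto

lemma grid_lower: "a \<le> b \<Longrightarrow> a \<le> grid a b n i"
  using grid_mono[of a b 0 i n] by (simp add: grid_def)

lemma grid_upper:
  assumes "a \<le> b" "i \<le> n"
  shows "grid a b n i \<le> b"
proof (cases "n = 0")
  case False
  then have "grid a b n n = b" by (simp add: grid_def)
  then show ?thesis using grid_mono[OF assms, where n=n] by simp
qed (simp add: grid_def assms)

lemma grid_Suc: "grid a b n (Suc i) = grid a b n i + (b - a) / n"
  unfolding grid_def by (simp add: distrib_right add_divide_distrib)

lemma exists_grid_interval:
  assumes "a < b" "0 < n" "x \<in> {a..b}"
  shows "\<exists>i<n. x \<in> {grid a b n i..grid a b n (Suc i)}"
  using exists_step_interval[of "(b - a) / n" n a x] assms by (simp add: grid_def)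

definition grid_cell :: "real \<Rightarrow> real \<Rightarrow> real \<Rightarrow> real \<Rightarrow> nat \<Rightarrow> nat \<Rightarrow> nat \<Rightarrow> (real \<times> real) set" where
  "grid_cell a b c d n i j =
    {(grid a b n i, grid c d n j)..(grid a b n (Suc i), grid c d n (Suc j))}"

lemma grid_cell_subset:
  assumes "a \<le> b" "c \<le> d" "i < n" "j < n"
  shows "grid_cell a b c d n i j \<subseteq> {a..b} \<times> {c..d}"
  using assms grid_lower[of a b n i] grid_lower[of c d n j]
    grid_upper[of a b "Suc i" n] grid_upper[of c d "Suc j" n]
  by (auto simp: grid_cell_def less_eq_prod_def)

lemma arzela_grid_sum_le:
  fixes p :: "nat \<Rightarrow> nat \<Rightarrow> real \<times> real"
  assumes bv: "arzela_bv_bound a b c d f K" and ab: "a \<le> b" and cd: "c \<le> d"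
    and p: "\<And>i j. i < n \<Longrightarrow> j < n \<Longrightarrow> p i j \<in> grid_cell a b c d n i j"
  shows "(\<Sum>i<n. \<Sum>j<n. \<bar>f (p i j) - f (grid a b n i, grid c d n j)\<bar>) \<le> 2 * real n * K"
proof (rule sum_square_le_by_diagonals)
  fix i0 j0 L assume len: "i0 + L \<le> n" "j0 + L \<le> n"
  define q where "q t = (grid a b n (i0 + t), grid c d n (j0 + t))" for t
  have cell: "q t \<le> p (i0 + t) (j0 + t) \<and> p (i0 + t) (j0 + t) \<le> q (Suc t)" if "t < L" for t
    using p[of "i0 + t" "j0 + t"] that len by (simp add: q_def grid_cell_def)
  have corner: "q t \<in> {(a, c)..(b, d)} \<and> q (Suc t) \<in> {(a, c)..(b, d)}" if "t < L" for t
    using that len grid_lower[OF ab] grid_lower[OF cd]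
      grid_upper[OF ab, of _ n] grid_upper[OF cd, of _ n]
    by (simp add: q_def less_eq_prod_def)
  show "(\<Sum>t<L. \<bar>f (p (i0 + t) (j0 + t)) - f (grid a b n (i0 + t), grid c d n (j0 + t))\<bar>) \<le> K"
    unfolding q_def[symmetric]
  proof (rule arzela_interleaved_le[OF bv ab cd])
    show "q t \<le> p (i0 + t) (j0 + t)" if "t < L" for t using cell[OF that] by simp
    show "p (i0 + t) (j0 + t) \<le> q (Suc t)" if "Suc t < L" for t using cell that by simp
    show "q t \<in> {(a, c)..(b, d)} \<and> p (i0 + t) (j0 + t) \<in> {(a, c)..(b, d)}" if "t < L" for t
      using cell[OF that] corner[OF that] by (auto intro: order_trans)
  qed
qed

lemma arzela_grid_oscillation_le:
  fixes pmin pmax :: "nat \<Rightarrow> nat \<Rightarrow> real \<times> real"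
  assumes bv: "arzela_bv_bound a b c d f K" and ab: "a \<le> b" and cd: "c \<le> d"
    and p: "\<And>i j. i < n \<Longrightarrow> j < n \<Longrightarrow>
      pmin i j \<in> grid_cell a b c d n i j \<and> pmax i j \<in> grid_cell a b c d n i j"
  shows "(\<Sum>i<n. \<Sum>j<n. f (pmax i j) - f (pmin i j)) \<le> 4 * real n * K"
proof -
  let ?corner = "\<lambda>i j. f (grid a b n i, grid c d n j)"
  have "(\<Sum>i<n. \<Sum>j<n. f (pmax i j) - f (pmin i j)) \<le>
      (\<Sum>i<n. \<Sum>j<n. \<bar>f (pmax i j) - ?corner i j\<bar>) + (\<Sum>i<n. \<Sum>j<n. \<bar>f (pmin i j) - ?corner i j\<bar>)"
    by (simp add: sum.distrib[symmetric] sum_mono)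
  also have "\<dots> \<le> 2 * real n * K + 2 * real n * K"
    using p by (intro add_mono arzela_grid_sum_le[OF bv ab cd]) auto
  finally show ?thesis by linarith
qed

lemma diameter_Times_le:
  fixes A :: "'a::real_normed_vector set" and B :: "'b::real_normed_vector set"
  assumes "bounded A" "bounded B"
  shows "diameter (A \<times> B) \<le> diameter A + diameter B"
proof (rule diameter_le)
  show "A \<times> B \<noteq> {} \<or> 0 \<le> diameter A + diameter B"
    using assms by (simp add: diameter_ge_0)
  fix p q assume "p \<in> A \<times> B" "q \<in> A \<times> B"
  then have "dist (fst p) (fst q) \<le> diameter A" "dist (snd p) (snd q) \<le> diameter B"
    using assms by (auto intro: diameter_bounded_bound)
  moreover have "norm (p - q) \<le> norm (fst p - fst q) + norm (snd p - snd q)"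
    by (cases p; cases q) (simp add: norm_Pair_le)
  ultimately show "norm (p - q) \<le> diameter A + diameter B"
    by (simp add: dist_norm)
qed

lemma graph_slice_cover:
  fixes f :: "real \<times> real \<Rightarrow> real"
  assumes "0 < h" and range: "\<And>x y. x \<in> I \<Longrightarrow> y \<in> J \<Longrightarrow> f (x, y) \<in> {m..M}"
  shows "{(x, y, f (x, y)) | x y. x \<in> I \<and> y \<in> J}
    \<subseteq> (\<Union>k < nat \<lceil>(M - m) / h\<rceil> + 1. I \<times> J \<times> {m + real k * h..m + real (Suc k) * h})"
proof
  fix w assume "w \<in> {(x, y, f (x, y)) | x y. x \<in> I \<and> y \<in> J}"
  then obtain x y where w: "w = (x, y, f (x, y))" and xy: "x \<in> I" "y \<in> J" by blast
  have fxy: "m \<le> f (x, y)" "f (x, y) \<le> M" using range[OF xy] by auto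
  have "(M - m) / h \<le> real (nat \<lceil>(M - m) / h\<rceil>)" by linarith
  then have "M - m \<le> real (nat \<lceil>(M - m) / h\<rceil>) * h"
    using \<open>0 < h\<close> by (simp add: pos_divide_le_eq)
  then have "f (x, y) \<le> m + real (nat \<lceil>(M - m) / h\<rceil> + 1) * h"
    using \<open>0 < h\<close> fxy by (simp add: distrib_right)
  then obtain k where "k < nat \<lceil>(M - m) / h\<rceil> + 1"
    "f (x, y) \<in> {m + real k * h..m + real (Suc k) * h}"
    using exists_step_interval[OF \<open>0 < h\<close>, of "nat \<lceil>(M - m) / h\<rceil> + 1" m "f (x, y)"] fxy by auto
  with w xy show "w \<in> (\<Union>k < nat \<lceil>(M - m) / h\<rceil> + 1. I \<times> J \<times> {m + real k * h..m + real (Suc k) * h})"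
    by blast
qed

lemma continuous_attains_min_max_family:
  fixes f :: "'a::topological_space \<Rightarrow> real"
  assumes "\<And>i. i \<in> I \<Longrightarrow> compact (S i) \<and> S i \<noteq> {} \<and> continuous_on (S i) f"
  shows "\<exists>pmin pmax. \<forall>i\<in>I. pmin i \<in> S i \<and> pmax i \<in> S i \<and> f ` S i \<subseteq> {f (pmin i)..f (pmax i)}"
proof -
  have "\<exists>p. fst p \<in> S i \<and> snd p \<in> S i \<and> f ` S i \<subseteq> {f (fst p)..f (snd p)}" if i: "i \<in> I" for i
  proof -
    obtain pmin pmax where "pmin \<in> S i" "pmax \<in> S i" "\<forall>q\<in>S i. f pmin \<le> f q" "\<forall>q\<in>S i. f q \<le> f pmax"
      using continuous_attains_inf[of "S i" f] continuous_attains_sup[of "S i" f] assms[OF i]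
      by blast
    then show ?thesis by (intro exI[of _ "(pmin, pmax)"]) auto
  qed
  then have "\<exists>P. \<forall>i\<in>I. fst (P i) \<in> S i \<and> snd (P i) \<in> S i \<and> f ` S i \<subseteq> {f (fst (P i))..f (snd (P i))}"
    by (intro bchoice) blast
  then obtain P where
    "\<forall>i\<in>I. fst (P i) \<in> S i \<and> snd (P i) \<in> S i \<and> f ` S i \<subseteq> {f (fst (P i))..f (snd (P i))}"
    by (elim exE)
  then show ?thesis by (intro exI[of _ "\<lambda>i. fst (P i)"] exI[of _ "\<lambda>i. snd (P i)"])
qed

lemma graph2_cover_by_cell_ranges:
  fixes f :: "real \<times> real \<Rightarrow> real" and m M :: "nat \<Rightarrow> nat \<Rightarrow> real"
  assumes ab: "a < b" and cd: "c < d" and n: "0 < n" and h: "0 < h"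
    and range: "\<And>i j p. i < n \<Longrightarrow> j < n \<Longrightarrow> p \<in> grid_cell a b c d n i j \<Longrightarrow> f p \<in> {m i j..M i j}"
    and le: "\<And>i j. i < n \<Longrightarrow> j < n \<Longrightarrow> m i j \<le> M i j"
  obtains C where "finite C" "graph2 a b c d f \<subseteq> \<Union>C"
    "\<And>U. U \<in> C \<Longrightarrow> bounded U \<and> diameter U \<le> (b - a) / n + ((d - c) / n + h)"
    "real (card C) \<le> (\<Sum>i<n. \<Sum>j<n. (M i j - m i j) / h + 2)"
proof -
  define X where "X = grid a b n"
  define Y where "Y = grid c d n"
  define N where "N i j = nat \<lceil>(M i j - m i j) / h\<rceil> + 1" for i j
  define box where "box i j k = {X i..X (Suc i)} \<times> {Y j..Y (Suc j)} \<times>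
    {m i j + real k * h..m i j + real (Suc k) * h}" for i j k
  define C where "C = (\<Union>i<n. \<Union>j<n. box i j ` {..<N i j})"
  show thesis
  proof
    show "finite C" by (simp add: C_def)
    show "graph2 a b c d f \<subseteq> \<Union>C"
    proof
      fix w assume "w \<in> graph2 a b c d f"
      then obtain x y where w: "w = (x, y, f (x, y))" "x \<in> {a..b}" "y \<in> {c..d}"
        unfolding graph2_def by blast
      obtain i j where ij: "i < n" "j < n" "x \<in> {X i..X (Suc i)}" "y \<in> {Y j..Y (Suc j)}"
        using exists_grid_interval[OF ab n w(2)] exists_grid_interval[OF cd n w(3)]
        by (auto simp: X_def Y_def)
      have "w \<in> (\<Union>k<N i j. box i j k)"
        unfolding N_def box_def using w ij range[OF ij(1,2)]
        by (intro subsetD[OF graph_slice_cover[OF h]])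
          (auto simp: grid_cell_def X_def Y_def less_eq_prod_def)
      then show "w \<in> \<Union>C" using ij by (auto simp: C_def)
    qed
    show "bounded U \<and> diameter U \<le> (b - a) / n + ((d - c) / n + h)" if "U \<in> C" for U
    proof -
      obtain i j k where U: "U = box i j k" using \<open>U \<in> C\<close> by (auto simp: C_def)
      have "diameter U \<le> (b - a) / n + ((d - c) / n + h)"
        unfolding U box_def using h ab cd
        by (intro order_trans[OF diameter_Times_le] add_mono order_trans[OF diameter_Times_le])
          (auto simp: X_def Y_def grid_Suc algebra_simps intro: bounded_Times)
      then show ?thesis by (simp add: U box_def bounded_Times)
    qed
    have "card C \<le> (\<Sum>i<n. card (\<Union>j<n. box i j ` {..<N i j}))"
      unfolding C_def by (rule card_UN_le) simp
    also have "\<dots> \<le> (\<Sum>i<n. \<Sum>j<n. card (box i j ` {..<N i j}))"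
      by (intro sum_mono card_UN_le) simp
    also have "\<dots> \<le> (\<Sum>i<n. \<Sum>j<n. N i j)"
      by (intro sum_mono order_trans[OF card_image_le]) simp_all
    finally have "real (card C) \<le> real (\<Sum>i<n. \<Sum>j<n. N i j)"
      by (rule of_nat_mono)
    also have "\<dots> \<le> (\<Sum>i<n. \<Sum>j<n. (M i j - m i j) / h + 2)"
      unfolding of_nat_sum
    proof (intro sum_mono)
      fix i j assume "i \<in> {..<n}" "j \<in> {..<n}"
      then have "0 \<le> (M i j - m i j) / h" using le[of i j] h by simp
      then show "real (N i j) \<le> (M i j - m i j) / h + 2"
        unfolding N_def by linarith
    qed
    finally show "real (card C) \<le> (\<Sum>i<n. \<Sum>j<n. (M i j - m i j) / h + 2)" .
  qed
qed

lemma grid_cell_extrema: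
  fixes f :: "real \<times> real \<Rightarrow> real"
  assumes ab: "a \<le> b" and cd: "c \<le> d" and cont: "continuous_on ({a..b} \<times> {c..d}) f"
  obtains pmin pmax where
    "\<And>i j. i < n \<Longrightarrow> j < n \<Longrightarrow> pmin i j \<in> grid_cell a b c d n i j"
    "\<And>i j. i < n \<Longrightarrow> j < n \<Longrightarrow> pmax i j \<in> grid_cell a b c d n i j"
    "\<And>i j p. i < n \<Longrightarrow> j < n \<Longrightarrow> p \<in> grid_cell a b c d n i j \<Longrightarrow> f p \<in> {f (pmin i j)..f (pmax i j)}"
proof -
  let ?Q = "case_prod (grid_cell a b c d n)"
  have "\<exists>pmin pmax. \<forall>ij\<in>{..<n} \<times> {..<n}. pmin ij \<in> ?Q ij \<and> pmax ij \<in> ?Q ij \<and>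
      f ` ?Q ij \<subseteq> {f (pmin ij)..f (pmax ij)}"
  proof (rule continuous_attains_min_max_family)
    fix ij assume "ij \<in> {..<n} \<times> {..<n}"
    then obtain i j where "ij = (i, j)" "i < n" "j < n" by blast
    then show "compact (?Q ij) \<and> ?Q ij \<noteq> {} \<and> continuous_on (?Q ij) f"
      using grid_cell_subset[OF ab cd, of i n j]
        grid_mono[OF ab, of i "Suc i" n] grid_mono[OF cd, of j "Suc j" n]
        continuous_on_subset[OF cont]
      by (simp add: grid_cell_def compact_Icc less_eq_prod_def)
  qed
  then obtain pmin pmax where P: "\<forall>ij\<in>{..<n} \<times> {..<n}. pmin ij \<in> ?Q ij \<and> pmax ij \<in> ?Q ij \<and>
      f ` ?Q ij \<subseteq> {f (pmin ij)..f (pmax ij)}"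
    by (elim exE)
  have P_ij: "pmin (i, j) \<in> grid_cell a b c d n i j" "pmax (i, j) \<in> grid_cell a b c d n i j"
    "f ` grid_cell a b c d n i j \<subseteq> {f (pmin (i, j))..f (pmax (i, j))}" if "i < n" "j < n" for i j
    using bspec[OF P, of "(i, j)"] that by simp_all
  show thesis
  proof (rule that[of "\<lambda>i j. pmin (i, j)" "\<lambda>i j. pmax (i, j)"])
    show "pmin (i, j) \<in> grid_cell a b c d n i j" "pmax (i, j) \<in> grid_cell a b c d n i j"
      if "i < n" "j < n" for i j
      using P_ij[OF that] by simp_all
    show "f p \<in> {f (pmin (i, j))..f (pmax (i, j))}"
      if "i < n" "j < n" "p \<in> grid_cell a b c d n i j" for i j p
      using P_ij(3)[OF that(1,2)] imageI[OF that(3)] by (rule subsetD)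
  qed
qed

lemma graph2_grid_cover:
  fixes f :: "real \<times> real \<Rightarrow> real"
  assumes ab: "a < b" and cd: "c < d" and cont: "continuous_on ({a..b} \<times> {c..d}) f"
    and bv: "arzela_bv_bound a b c d f K" and n: "0 < n"
  defines "L \<equiv> max (b - a) (d - c)"
  obtains C where "finite C" "graph2 a b c d f \<subseteq> \<Union>C"
    "\<And>U. U \<in> C \<Longrightarrow> bounded U \<and> diameter U \<le> 3 * (L / n)"
    "real (card C) \<le> real n ^ 2 * (2 + 4 * K / L)"
proof -
  have "0 < L" using ab cd by (simp add: L_def)
  obtain pmin pmax where
    pmin: "\<And>i j. i < n \<Longrightarrow> j < n \<Longrightarrow> pmin i j \<in> grid_cell a b c d n i j" and
    pmax: "\<And>i j. i < n \<Longrightarrow> j < n \<Longrightarrow> pmax i j \<in> grid_cell a b c d n i j" and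
    range: "\<And>i j p. i < n \<Longrightarrow> j < n \<Longrightarrow> p \<in> grid_cell a b c d n i j \<Longrightarrow>
      f p \<in> {f (pmin i j)..f (pmax i j)}"
    by (rule grid_cell_extrema[OF less_imp_le[OF ab] less_imp_le[OF cd] cont]) (rule that)
  obtain C where C: "finite C" "graph2 a b c d f \<subseteq> \<Union>C"
    "\<And>U. U \<in> C \<Longrightarrow> bounded U \<and> diameter U \<le> (b - a) / n + ((d - c) / n + L / n)"
    "real (card C) \<le> (\<Sum>i<n. \<Sum>j<n. (f (pmax i j) - f (pmin i j)) / (L / n) + 2)"
  proof (rule graph2_cover_by_cell_ranges[OF ab cd n,
        where m = "\<lambda>i j. f (pmin i j)" and M = "\<lambda>i j. f (pmax i j)" and f = f])
    show "0 < L / n" using \<open>0 < L\<close> n by simp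
    show "f p \<in> {f (pmin i j)..f (pmax i j)}"
      if "i < n" "j < n" "p \<in> grid_cell a b c d n i j" for i j p
      using range[OF that] .
    show "f (pmin i j) \<le> f (pmax i j)" if "i < n" "j < n" for i j
      using range[OF that pmin[OF that]] by simp
  qed (rule that)
  have "(b - a) / n \<le> L / n" "(d - c) / n \<le> L / n"
    by (simp_all add: L_def divide_right_mono)
  then have diam: "bounded U \<and> diameter U \<le> 3 * (L / n)" if "U \<in> C" for U
    using C(3)[OF that] by linarith
  have osc: "(\<Sum>i<n. \<Sum>j<n. f (pmax i j) - f (pmin i j)) \<le> 4 * real n * K"
    using pmin pmax
    by (intro arzela_grid_oscillation_le[OF bv less_imp_le[OF ab] less_imp_le[OF cd]] conjI)
  have "(\<Sum>i<n. \<Sum>j<n. (f (pmax i j) - f (pmin i j)) / (L / n) + 2)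
      = real n / L * (\<Sum>i<n. \<Sum>j<n. f (pmax i j) - f (pmin i j)) + 2 * real n ^ 2"
    by (simp add: sum.distrib sum_distrib_left power2_eq_square mult.commute)
  also have "\<dots> \<le> real n / L * (4 * real n * K) + 2 * real n ^ 2"
    using osc \<open>0 < L\<close> by (intro add_right_mono mult_left_mono) simp_all
  also have "\<dots> = real n ^ 2 * (2 + 4 * K / L)"
    using \<open>0 < L\<close> by (simp add: field_simps power2_eq_square)
  finally show thesis
    using that C(1,2) diam C(4) by (meson order_trans)
qed

lemma graph2_small_cover:
  fixes f :: "real \<times> real \<Rightarrow> real"
  assumes ab: "a < b" and cd: "c < d" and cont: "continuous_on ({a..b} \<times> {c..d}) f"
    and bv: "arzela_bv_bound a b c d f K" and \<delta>: "0 < \<delta>" "\<delta> \<le> max (b - a) (d - c)"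
  defines "L \<equiv> max (b - a) (d - c)"
  obtains C where "finite C" "graph2 a b c d f \<subseteq> \<Union>C" "\<forall>U\<in>C. bounded U \<and> diameter U \<le> \<delta>"
    "real (card C) \<le> 16 * L^2 * (2 + 4 * K / L) / \<delta> powr 2"
proof -
  define n where "n = nat \<lceil>3 * L / \<delta>\<rceil>"
  have "1 \<le> L / \<delta>" using \<delta> by (simp add: L_def)
  moreover have "real n = of_int \<lceil>3 * L / \<delta>\<rceil>"
    using \<open>1 \<le> L / \<delta>\<close> unfolding n_def by simp
  ultimately have n: "3 * L / \<delta> \<le> real n" "real n \<le> 4 * L / \<delta>" "0 < n"
    by linarith+
  obtain C where C: "finite C" "graph2 a b c d f \<subseteq> \<Union>C"
    "\<And>U. U \<in> C \<Longrightarrow> bounded U \<and> diameter U \<le> 3 * (L / n)"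
    "real (card C) \<le> real n ^ 2 * (2 + 4 * K / L)"
    by (rule graph2_grid_cover[OF ab cd cont bv n(3), folded L_def]) (rule that)
  have "3 * (L / n) \<le> \<delta>"
    using n(1,3) \<delta>(1) by (simp add: field_simps)
  then have "\<forall>U\<in>C. bounded U \<and> diameter U \<le> \<delta>"
    using C(3) by fastforce
  moreover have "0 \<le> 2 + 4 * K / L"
    using arzela_bv_bound_nonneg[OF bv] ab cd by (simp add: L_def)
  then have "real n ^ 2 * (2 + 4 * K / L) \<le> (4 * L / \<delta>)^2 * (2 + 4 * K / L)"
    using n(2) by (intro mult_right_mono power_mono) auto
  then have "real (card C) \<le> 16 * L^2 * (2 + 4 * K / L) / \<delta> powr 2"
    using C(4) \<delta>(1) by (simp add: power_divide)
  ultimately show thesis using that C(1,2) by blast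
qed

theorem mainTheorem4:
  fixes a b c d :: real and f :: "real \<times> real \<Rightarrow> real"
  assumes "a < b" and "c < d"
    and "continuous_on ({a..b} \<times> {c..d}) f"
    and "arzela_bv a b c d f"
  shows "has_box_dim (graph2 a b c d f) 2 \<and> hausdorff_dim (graph2 a b c d f) = 2"
proof -
  obtain K where bv: "arzela_bv_bound a b c d f K"
    using assms(4) by (auto simp: arzela_bv_iff_bound)
  define L where "L = max (b - a) (d - c)"
  define B where "B = 16 * L^2 * (2 + 4 * K / L)"
  have "0 < L" "0 \<le> K"
    using assms(1,2) arzela_bv_bound_nonneg[OF bv] by (auto simp: L_def)
  then have "0 < B" by (simp add: B_def add_pos_nonneg)
  show ?thesis
  proof (rule box_dim_and_hausdorff_dim_eqI[OF _ \<open>0 < B\<close> \<open>0 < L\<close>])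
    show "0 < (b - a) * (d - c) / 4" using assms(1,2) by simp
    show "\<exists>C. finite C \<and> graph2 a b c d f \<subseteq> \<Union>C \<and> (\<forall>U\<in>C. bounded U \<and> diameter U \<le> \<delta>) \<and>
        real (card C) \<le> B / \<delta> powr 2" if \<delta>: "0 < \<delta>" "\<delta> < L" for \<delta>
    proof -
      have "\<delta> \<le> L" using \<delta>(2) by simp
      then obtain C where "finite C" "graph2 a b c d f \<subseteq> \<Union>C" "\<forall>U\<in>C. bounded U \<and> diameter U \<le> \<delta>"
        "real (card C) \<le> 16 * L^2 * (2 + 4 * K / L) / \<delta> powr 2"
        by (rule graph2_small_cover[OF assms(1-3) bv \<delta>(1), folded L_def]) (rule that)
      then show ?thesis unfolding B_def by blast
    qed
    show "ennreal ((b - a) * (d - c) / 4) \<le> (\<Sum>i. ennreal (diameter (U i) powr 2))"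
      if "graph2 a b c d f \<subseteq> (\<Union>i. U i)" "\<forall>i. bounded (U i)" for U
      using assms(1,2) that by (intro graph2_area_le_sum_diameter_sq) auto
  qed simp
qed

end
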